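(* For every $n\ge 1$, $s(n)\le \lfloor \log_2 p_n\rfloor$.
   Context: $p_n$ denotes the $n$-th prime ($p_1=2$). For an integer $k\ge 3$, say that a positive integer $m$ is represented by $F_k$ if there exist integers $1\le x_1\le x_2\le\dots\le x_k$ with $x_1x_2\cdots x_k+x_1+\dots+x_k=m$. For $n\ge 1$, $s(n)$ is the smallest integer $k\ge 3$ such that $p_n+k-3$ is represented by $F_k$, and $s(n)=0$ if no such $k\ge 3$ exists. *)

theory Defs
  imports Complex_Main "HOL-Computational_Algebra.Primes"
begin

fun prime_seq :: "nat \<Rightarrow> nat" where
  "prime_seq 0 = 2"
| "prime_seq (Suc k) = (LEAST q. prime q \<and> prime_seq k < q)"

text \<open>p n is the n-th prime, with p 1 = 2 (only meaningful for n \<ge> 1).\<close>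
definition p :: "nat \<Rightarrow> nat" where
  "p n = prime_seq (n - 1)"

text \<open>m is represented by F_k: there are integers 1 \<le> x_1 \<le> ... \<le> x_k with
  x_1 * ... * x_k + x_1 + ... + x_k = m.\<close>
definition represented_by :: "nat \<Rightarrow> nat \<Rightarrow> bool" where
  "represented_by k m \<longleftrightarrow>
     (\<exists>xs :: int list. length xs = k \<and> sorted xs \<and> (\<forall>x\<in>set xs. 1 \<le> x)
        \<and> prod_list xs + sum_list xs = int m)"

definition s :: "nat \<Rightarrow> nat" where
  "s n = (if \<exists>k\<ge>3. represented_by k (p n + k - 3)
          then (LEAST k. 3 \<le> k \<and> represented_by k (p n + k - 3))
          else 0)"

end

theory Submission
  imports Defs
begin

text \<open>Entries equal to 1 can be deleted from a representation: each one contributes 1 to the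
  sum and nothing to the product, so the quantity prod + sum - length is unchanged. What remains
  is a list of j entries, all at least 2, with prod + sum = p - 3 + j. For prime p this forces
  j \<ge> 3 (j = 0, 1, 2 would give p = 4, p even, or p = (a + 1)(b + 1)), so j is admissible in
  the definition of s, and 2^j + 2j \<le> prod + sum = p - 3 + j gives 2^j < p.\<close>

lemma prime_prime_seq: "prime (prime_seq k)"
proof (induction k)
  case (Suc k)
  obtain q where "prime q \<and> prime_seq k < q" using bigger_prime by blast
  then show ?case by (simp, metis (mono_tags, lifting) LeastI_ex)
qed simp

lemma prime_p: "prime (p n)"
  unfolding p_def by (rule prime_prime_seq)

lemma prod_list_filter_ge_2:
  "\<forall>x\<in>set xs. (1::int) \<le> x \<Longrightarrow> prod_list (filter (\<lambda>x. 2 \<le> x) xs) = prod_list xs"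
  by (induction xs) auto

lemma sum_list_minus_length_filter_ge_2:
  "\<forall>x\<in>set xs. (1::int) \<le> x \<Longrightarrow>
    sum_list (filter (\<lambda>x. 2 \<le> x) xs) - int (length (filter (\<lambda>x. 2 \<le> x) xs))
      = sum_list xs - int (length xs)"
  by (induction xs) auto

lemma two_power_length_le_prod_list:
  "\<forall>x\<in>set ys. (2::int) \<le> x \<Longrightarrow> 2 ^ length ys \<le> prod_list ys"
proof (induction ys)
  case (Cons a ys)
  then show ?case by (simp add: mult_mono)
qed simp

lemma two_length_le_sum_list: "\<forall>x\<in>set ys. (2::int) \<le> x \<Longrightarrow> 2 * int (length ys) \<le> sum_list ys"
  by (induction ys) auto

lemma prime_neq_double_plus_two:
  assumes "prime P" and "(a::int) \<ge> 2"
  shows "int P \<noteq> 2 * a + 2"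
proof
  assume "int P = 2 * a + 2"
  then have "P = 2 * nat (a + 1)" and "P > 2" using assms(2) by linarith+
  then show False using prime_odd_nat[OF assms(1)] by simp
qed

lemma prime_neq_succ_mult_succ:
  assumes "prime P" and "(a::int) \<ge> 2" and "b \<ge> 2"
  shows "int P \<noteq> (a + 1) * (b + 1)"
proof
  assume "int P = (a + 1) * (b + 1)"
  then have "P = nat (a + 1) * nat (b + 1)"
    using assms(2,3) by (simp add: nat_mult_distrib[symmetric])
  moreover have "nat (a + 1) \<noteq> 1" and "nat (b + 1) \<noteq> 1" using assms(2,3) by linarith+
  ultimately show False using prime_product assms(1) by blast
qed

lemma three_le_length_if_prod_sum_eq_prime:
  assumes "prime P" and ge2: "\<forall>x\<in>set ys. (2::int) \<le> x"
    and eq: "prod_list ys + sum_list ys = int P - 3 + int (length ys)"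
  shows "3 \<le> length ys"
proof -
  consider "ys = []" | a where "ys = [a]" | a b where "ys = [a, b]" | a b c zs where "ys = a # b # c # zs"
    by (metis list.exhaust)
  then show ?thesis
  proof cases
    case 1
    then have "P = 4" using eq by simp
    then show ?thesis using \<open>prime P\<close> prime_odd_nat[of P] by simp
  next
    case 2
    then show ?thesis using eq ge2 prime_neq_double_plus_two[OF \<open>prime P\<close>, of a] by simp
  next
    case 3
    then show ?thesis using eq ge2 prime_neq_succ_mult_succ[OF \<open>prime P\<close>, of a b]
      by (simp add: algebra_simps)
  qed simp
qed

lemma two_power_length_less_if_prod_sum_eq:
  assumes "\<forall>x\<in>set ys. (2::int) \<le> x" and "prod_list ys + sum_list ys = int m - 3 + int (length ys)"
  shows "2 ^ length ys < m"
proof -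
  have "(2::int) ^ length ys < int m"
    using assms two_power_length_le_prod_list[OF assms(1)] two_length_le_sum_list[OF assms(1)]
    by linarith
  then show ?thesis by (metis of_nat_less_iff of_nat_numeral of_nat_power)
qed

lemma represented_by_filter_ge_2:
  assumes "represented_by k m"
  obtains ys where "sorted ys" and "\<forall>x\<in>set ys. (2::int) \<le> x"
    and "prod_list ys + sum_list ys - int (length ys) = int m - int k"
proof -
  obtain xs where "length xs = k" "sorted xs" "\<forall>x\<in>set xs. (1::int) \<le> x"
    "prod_list xs + sum_list xs = int m"
    using assms unfolding represented_by_def by blast
  then show ?thesis
    using that[of "filter (\<lambda>x. 2 \<le> x) xs"] sorted_wrt_filter
      prod_list_filter_ge_2 sum_list_minus_length_filter_ge_2 by fastforce
qed

lemma s_le: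
  assumes "3 \<le> k" and "represented_by k (p n + k - 3)"
  shows "s n \<le> k"
  using assms unfolding s_def by (auto intro: Least_le)

lemma two_power_s_less_p: "2 ^ s n < p n"
proof (cases "\<exists>k\<ge>3. represented_by k (p n + k - 3)")
  case False
  then have "s n = 0" unfolding s_def by auto
  then show ?thesis using prime_gt_1_nat[OF prime_p] by simp
next
  case True
  then obtain k where "3 \<le> k" and "represented_by k (p n + k - 3)" by blast
  obtain ys where sorted: "sorted ys" and ge2: "\<forall>x\<in>set ys. (2::int) \<le> x"
    and "prod_list ys + sum_list ys - int (length ys) = int (p n + k - 3) - int k"
    by (rule represented_by_filter_ge_2[OF \<open>represented_by k (p n + k - 3)\<close>])
  then have eq: "prod_list ys + sum_list ys = int (p n) - 3 + int (length ys)"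
    using \<open>3 \<le> k\<close> by (simp add: of_nat_diff)
  have "3 \<le> length ys" by (rule three_le_length_if_prod_sum_eq_prime[OF prime_p ge2 eq])
  then have "represented_by (length ys) (p n + length ys - 3)"
    unfolding represented_by_def using sorted ge2 eq by force
  then have "s n \<le> length ys" using \<open>3 \<le> length ys\<close> by (rule s_le[rotated])
  then have "2 ^ s n \<le> (2::nat) ^ length ys" by simp
  also have "\<dots> < p n" by (rule two_power_length_less_if_prod_sum_eq[OF ge2 eq])
  finally show ?thesis .
qed

theorem proposition4:
  fixes n :: nat
  assumes "n \<ge> 1"
  shows "int (s n) \<le> \<lfloor>log 2 (real (p n))\<rfloor>"
proof -
  have "2 ^ s n \<le> real (p n)"
    using two_power_s_less_p[of n] by (metis of_nat_le_iff of_nat_numeral of_nat_power less_imp_le)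
  then have "real (s n) \<le> log 2 (real (p n))" by (rule le_log_of_power) simp
  then show ?thesis by (simp add: le_floor_iff)
qed

end
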